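(* Let $\delta\in(0,1)$, let $S\subseteq V$ be fixed, and let $\mathcal{R}$ be a collection of $T$ independent IBSs drawn from $\Omega^n$. Let $c=\ln(1/\delta)$ and $p=p(S)$. Define $$f_l(\mathcal{R},\delta)=\min\left\{\hat{\mathbb{B}}(S)-\frac{\rho c\Gamma}{3T},\ \hat{\mathbb{B}}(S)-\frac{\Gamma}{T}\left(\frac{\rho c}{3}-cp+\sqrt{\Big(\frac{\rho c}{3}-cp\Big)^2+2Tpc\frac{\hat{\mathbb{B}}(S)}{\Gamma}}\right)\right\}.$$ Then $\Pr[\mathbb{B}(S)\ge f_l(\mathcal{R},\delta)]\ge1-\delta$.
   Context: Setting: $G=(V,E)$ is a directed graph under the Independent Cascade model with edge probabilities $p(u,v)\in(0,1)$. A random live-edge graph $g$ keeps each edge $e$ independently with probability $p(e)$, and $R(g,S)$ is the set of nodes reachable from $S$ in $g$. Each node has benefit $b(u)\ge0$. The benefit function is $\mathbb{B}(S)=\mathbb{E}_g[\sum_{u\in R(g,S)}b(u)]$. Let $\Gamma=\sum_u b(u)>0$. For each node $u$, $\gamma(u)=1-\prod_{v\in N_{in}(u)}(1-p(v,u))$, and $\Phi=\sum_u\gamma(u)b(u)>0$. IBS distribution $\Omega^n$: pick a source $u$ with probability $\gamma(u)b(u)/\Phi$. Then output the set of nodes that can reach $u$ in a random live-edge graph, conditioned on at least one in-edge of $u$ being kept. For a collection $\mathcal{R}=\{R_1,\dots,R_T\}$ of IBSs, the estimator is $$\hat{\mathbb{B}}(S)=\frac{\Phi}{T}\sum_{j=1}^T\min\{1,|S\cap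 R_j|\}+\sum_{v\in S}(1-\gamma(v))b(v).$$ Further definitions: - $\mu_{\min}(S)=\sum_{v\in S}(1-\gamma(v))b(v)/\Gamma$; - $\rho=\Phi/\Gamma$; - $\mu_{\max}(S)=\rho+\mu_{\min}(S)$; - $p(S)=\min\{\rho,\ \mu_{\max}(S)+\mu_{\min}(S)-2\sqrt{\mu_{\min}(S)\mu_{\max}(S)}\}$. *)

theory Defs
  imports "HOL-Probability.Probability"
begin

text \<open>Independent Cascade model on a directed graph with vertex set V and edge set E,
  edge probabilities pe. A live-edge graph is a random function E -> bool
  (edge kept or not), edges kept independently with probability pe e.\<close>

definition live_pmf :: "('a \<times> 'a) set \<Rightarrow> ('a \<times> 'a \<Rightarrow> real) \<Rightarrow> ('a \<times> 'a \<Rightarrow> bool) pmf" where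
  "live_pmf E pe = Pi_pmf E False (\<lambda>e. bernoulli_pmf (pe e))"

definition live_edges :: "('a \<times> 'a) set \<Rightarrow> ('a \<times> 'a \<Rightarrow> bool) \<Rightarrow> ('a \<times> 'a) set" where
  "live_edges E g = {e \<in> E. g e}"

definition reach :: "('a \<times> 'a) set \<Rightarrow> ('a \<times> 'a \<Rightarrow> bool) \<Rightarrow> 'a set \<Rightarrow> 'a set" where
  "reach E g S = {v. \<exists>s\<in>S. (s, v) \<in> (live_edges E g)\<^sup>*}"

definition benefit :: "('a \<times> 'a) set \<Rightarrow> ('a \<times> 'a \<Rightarrow> real) \<Rightarrow> ('a \<Rightarrow> real) \<Rightarrow> 'a set \<Rightarrow> real" where
  "benefit E pe b S = measure_pmf.expectation (live_pmf E pe) (\<lambda>g. \<Sum>u\<in>reach E g S. b u)"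

definition in_nbrs :: "('a \<times> 'a) set \<Rightarrow> 'a \<Rightarrow> 'a set" where
  "in_nbrs E u = {v. (v, u) \<in> E}"

definition gam :: "('a \<times> 'a) set \<Rightarrow> ('a \<times> 'a \<Rightarrow> real) \<Rightarrow> 'a \<Rightarrow> real" where
  "gam E pe u = 1 - (\<Prod>v\<in>in_nbrs E u. 1 - pe (v, u))"

definition Gamma_tot :: "'a set \<Rightarrow> ('a \<Rightarrow> real) \<Rightarrow> real" where
  "Gamma_tot V b = (\<Sum>u\<in>V. b u)"

definition Phi :: "'a set \<Rightarrow> ('a \<times> 'a) set \<Rightarrow> ('a \<times> 'a \<Rightarrow> real) \<Rightarrow> ('a \<Rightarrow> real) \<Rightarrow> real" where
  "Phi V E pe b = (\<Sum>u\<in>V. gam E pe u * b u)"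

definition source_pmf :: "'a set \<Rightarrow> ('a \<times> 'a) set \<Rightarrow> ('a \<times> 'a \<Rightarrow> real) \<Rightarrow> ('a \<Rightarrow> real) \<Rightarrow> 'a pmf" where
  "source_pmf V E pe b = embed_pmf (\<lambda>u. if u \<in> V then gam E pe u * b u / Phi V E pe b else 0)"

definition IBS_pmf :: "'a set \<Rightarrow> ('a \<times> 'a) set \<Rightarrow> ('a \<times> 'a \<Rightarrow> real) \<Rightarrow> ('a \<Rightarrow> real) \<Rightarrow> 'a set pmf" where
  "IBS_pmf V E pe b =
     bind_pmf (source_pmf V E pe b) (\<lambda>u.
       map_pmf (\<lambda>g. {v. (v, u) \<in> (live_edges E g)\<^sup>*})
         (cond_pmf (live_pmf E pe) {g. \<exists>v. (v, u) \<in> E \<and> g (v, u)}))"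

definition IBS_sample_pmf :: "'a set \<Rightarrow> ('a \<times> 'a) set \<Rightarrow> ('a \<times> 'a \<Rightarrow> real) \<Rightarrow> ('a \<Rightarrow> real) \<Rightarrow> nat \<Rightarrow> (nat \<Rightarrow> 'a set) pmf" where
  "IBS_sample_pmf V E pe b T = Pi_pmf {..<T} {} (\<lambda>_. IBS_pmf V E pe b)"

definition est :: "'a set \<Rightarrow> ('a \<times> 'a) set \<Rightarrow> ('a \<times> 'a \<Rightarrow> real) \<Rightarrow> ('a \<Rightarrow> real) \<Rightarrow> nat \<Rightarrow> (nat \<Rightarrow> 'a set) \<Rightarrow> 'a set \<Rightarrow> real" where
  "est V E pe b T Rs S = Phi V E pe b / real T * (\<Sum>j<T. min 1 (real (card (S \<inter> Rs j))))
      + (\<Sum>v\<in>S. (1 - gam E pe v) * b v)"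

definition mu_min :: "'a set \<Rightarrow> ('a \<times> 'a) set \<Rightarrow> ('a \<times> 'a \<Rightarrow> real) \<Rightarrow> ('a \<Rightarrow> real) \<Rightarrow> 'a set \<Rightarrow> real" where
  "mu_min V E pe b S = (\<Sum>v\<in>S. (1 - gam E pe v) * b v) / Gamma_tot V b"

definition rho :: "'a set \<Rightarrow> ('a \<times> 'a) set \<Rightarrow> ('a \<times> 'a \<Rightarrow> real) \<Rightarrow> ('a \<Rightarrow> real) \<Rightarrow> real" where
  "rho V E pe b = Phi V E pe b / Gamma_tot V b"

definition mu_max :: "'a set \<Rightarrow> ('a \<times> 'a) set \<Rightarrow> ('a \<times> 'a \<Rightarrow> real) \<Rightarrow> ('a \<Rightarrow> real) \<Rightarrow> 'a set \<Rightarrow> real" where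
  "mu_max V E pe b S = rho V E pe b + mu_min V E pe b S"

definition pS :: "'a set \<Rightarrow> ('a \<times> 'a) set \<Rightarrow> ('a \<times> 'a \<Rightarrow> real) \<Rightarrow> ('a \<Rightarrow> real) \<Rightarrow> 'a set \<Rightarrow> real" where
  "pS V E pe b S = min (rho V E pe b)
     (mu_max V E pe b S + mu_min V E pe b S
        - 2 * sqrt (mu_min V E pe b S * mu_max V E pe b S))"

definition f_l :: "'a set \<Rightarrow> ('a \<times> 'a) set \<Rightarrow> ('a \<times> 'a \<Rightarrow> real) \<Rightarrow> ('a \<Rightarrow> real) \<Rightarrow> nat \<Rightarrow> 'a set \<Rightarrow> real \<Rightarrow> (nat \<Rightarrow> 'a set) \<Rightarrow> real" where
  "f_l V E pe b T S \<delta> Rs =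
     (let c = ln (1 / \<delta>); p = pS V E pe b S; \<rho> = rho V E pe b; \<Gamma> = Gamma_tot V b;
          Bh = est V E pe b T Rs S
      in min (Bh - \<rho> * c * \<Gamma> / (3 * real T))
             (Bh - \<Gamma> / real T * (\<rho> * c / 3 - c * p
                 + sqrt ((\<rho> * c / 3 - c * p)\<^sup>2 + 2 * real T * p * c * Bh / \<Gamma>))))"

end

theory Submission
  imports Defs
begin

text \<open>The estimator is an affine function of the number \<open>K\<close> of sampled IBSs meeting \<open>S\<close>,
  and \<open>B(S) = \<Phi> q + \<mu>_min(S) \<Gamma>\<close> with \<open>q = Pr[S \<inter> R \<noteq> {}]\<close>, so \<open>K\<close> is a binomial count
  with mean \<open>T q\<close>.  If \<open>B(S) < f_l\<close>, solving the quadratic inequality that defines \<open>f_l\<close> shows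
  that \<open>K - T q\<close> exceeds a threshold \<open>s\<close>, and Bernstein's inequality bounds the probability of
  this by \<open>exp (- s\<^sup>2 / (2 (T q (1 - q) + s / 3)))\<close>.  The variance \<open>q (1 - q)\<close> is controlled by
  \<open>p(S)\<close> and \<open>\<mu> = B(S) / \<Gamma>\<close>, so the bound is at most \<open>exp (- ln (1 / \<delta>)) = \<delta>\<close>.\<close>

lemma two_mult_three_power_le_fact: "2 * 3 ^ n \<le> (fact (n + 2) :: real)"
proof (induction n)
  case (Suc n)
  have "3 * (2 * 3 ^ n) \<le> (real n + 3) * (fact (n + 2) :: real)"
    using Suc by (intro mult_mono) auto
  then show ?case by (simp add: algebra_simps)
qed simp

text \<open>Bernstein's bound on the exponential, from comparing its Taylor tail with a geometric series.\<close>
lemma exp_le_Bernstein: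
  fixes z l :: real
  assumes "\<bar>z\<bar> \<le> 1" and "0 \<le> l" and "l < 3"
  shows "exp (l * z) \<le> 1 + l * z + z\<^sup>2 * (l\<^sup>2 / (2 * (1 - l / 3)))"
proof -
  define x where "x = l * z"
  have tail: "(\<lambda>n. x ^ (n + 2) / fact (n + 2)) sums (exp x - (1 + x))"
  proof -
    have "(\<lambda>n. x ^ n / fact n) sums exp x"
      using exp_converges[of x] by (simp add: divide_inverse_commute)
    then have "(\<lambda>n. x ^ (n + 2) / fact (n + 2)) sums (exp x - (\<Sum>i<2. x ^ i / fact i))"
      by (subst sums_iff_shift) simp
    then show ?thesis by (simp add: eval_nat_numeral)
  qed
  have geometric: "(\<lambda>n. z\<^sup>2 * (l\<^sup>2 / 2) * (l / 3) ^ n) sums (z\<^sup>2 * (l\<^sup>2 / 2) * (1 / (1 - l / 3)))"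
    by (intro sums_mult geometric_sums) (use assms in auto)
  have "x ^ (n + 2) / fact (n + 2) \<le> z\<^sup>2 * (l\<^sup>2 / 2) * (l / 3) ^ n" for n
  proof -
    have "x ^ (n + 2) \<le> \<bar>x\<bar> ^ (n + 2)" by (metis abs_ge_self power_abs)
    also have "\<dots> = \<bar>z\<bar> ^ n * (z\<^sup>2 * l ^ (n + 2))"
      using assms by (simp add: x_def abs_mult power_mult_distrib power_add power2_eq_square)
    also have "\<dots> \<le> z\<^sup>2 * l ^ (n + 2)"
      using assms by (intro mult_left_le_one_le mult_nonneg_nonneg power_le_one) auto
    finally have "x ^ (n + 2) / fact (n + 2) \<le> z\<^sup>2 * l ^ (n + 2) / fact (n + 2)"
      by (intro divide_right_mono) auto
    also have "\<dots> \<le> z\<^sup>2 * l ^ (n + 2) / (2 * 3 ^ n)"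
      by (intro divide_left_mono two_mult_three_power_le_fact) (use assms in auto)
    also have "\<dots> = z\<^sup>2 * (l\<^sup>2 / 2) * (l / 3) ^ n"
      by (simp add: power_add power_divide power2_eq_square)
    finally show ?thesis .
  qed
  then have "exp x - (1 + x) \<le> z\<^sup>2 * (l\<^sup>2 / 2) * (1 / (1 - l / 3))"
    by (intro sums_le[OF _ tail geometric]) auto
  then show ?thesis by (simp add: x_def field_simps)
qed

lemma integrable_measure_pmf_bounded:
  fixes f :: "'b \<Rightarrow> real"
  assumes "\<And>x. \<bar>f x\<bar> \<le> C"
  shows "integrable (measure_pmf M) f"
  by (rule measure_pmf.integrable_const_bound[where B = C]) (use assms in auto)

lemma expectation_exp_centered_indicator:
  fixes M :: "'b pmf" and A :: "'b set" and l :: real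
  defines "q \<equiv> measure_pmf.prob M A"
  shows "measure_pmf.expectation M (\<lambda>x. exp (l * (indicator A x - q)))
        = q * exp (l * (1 - q)) + (1 - q) * exp (- l * q)"
proof -
  have "(\<lambda>x. exp (l * (indicator A x - q))) =
      (\<lambda>x. (exp (l * (1 - q)) - exp (- l * q)) * indicator A x + exp (- l * q))"
    by (auto simp: fun_eq_iff indicator_def)
  moreover have "integrable (measure_pmf M) (indicator A :: 'b \<Rightarrow> real)"
    by (rule integrable_measure_pmf_bounded[where C = 1]) (auto simp: indicator_def)
  ultimately show ?thesis
    by (simp add: q_def algebra_simps)
qed

lemma expectation_exp_centered_indicator_le:
  fixes M :: "'b pmf" and A :: "'b set" and l :: real
  defines "q \<equiv> measure_pmf.prob M A"
  assumes "0 \<le> l" and "l < 3"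
  shows "measure_pmf.expectation M (\<lambda>x. exp (l * (indicator A x - q)))
        \<le> exp (q * (1 - q) * (l\<^sup>2 / (2 * (1 - l / 3))))"
proof -
  define k where "k = l\<^sup>2 / (2 * (1 - l / 3))"
  have q: "0 \<le> q" "q \<le> 1" by (auto simp: q_def)
  have "measure_pmf.expectation M (\<lambda>x. exp (l * (indicator A x - q)))
        = q * exp (l * (1 - q)) + (1 - q) * exp (l * (- q))"
    unfolding q_def by (subst expectation_exp_centered_indicator) simp
  also have "\<dots> \<le> q * (1 + l * (1 - q) + (1 - q)\<^sup>2 * k) + (1 - q) * (1 + l * (- q) + (- q)\<^sup>2 * k)"
    unfolding k_def using q assms
    by (intro add_mono mult_left_mono exp_le_Bernstein) auto
  also have "\<dots> = 1 + q * (1 - q) * k" by (simp add: algebra_simps power2_eq_square)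
  also have "\<dots> \<le> exp (q * (1 - q) * k)" by (rule exp_ge_add_one_self)
  finally show ?thesis unfolding k_def .
qed

lemma prob_sum_indicator_ge_le_Chernoff:
  fixes M :: "'b pmf" and A :: "'b set" and l s :: real
  defines "q \<equiv> measure_pmf.prob M A"
  assumes "0 \<le> l"
  shows "measure_pmf.prob (Pi_pmf {..<T} d (\<lambda>_. M))
           {Rs. s \<le> (\<Sum>j<T. indicator A (Rs j)) - real T * q}
         \<le> exp (- l * s) * measure_pmf.expectation M (\<lambda>x. exp (l * (indicator A x - q))) ^ T"
proof -
  let ?P = "Pi_pmf {..<T} d (\<lambda>_. M)"
  let ?X = "{Rs. s \<le> (\<Sum>j<T. indicator A (Rs j)) - real T * q}"
  define f where "f = (\<lambda>x. exp (l * (indicator A x - q)))"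
  have "integrable (measure_pmf M) f"
  proof (rule integrable_measure_pmf_bounded[where C = "exp l"])
    have "0 \<le> q" "q \<le> 1" by (auto simp: q_def)
    then show "\<bar>f x\<bar> \<le> exp l" for x
      using assms(2) by (auto simp: f_def indicator_def mult_left_le)
  qed
  then have int_f: "\<And>j. j \<in> {..<T} \<Longrightarrow> integrable (measure_pmf M) f" .
  have markov: "indicator ?X Rs \<le> exp (- l * s) * (\<Prod>j<T. f (Rs j))" for Rs
  proof -
    have "exp (- l * s) * (\<Prod>j<T. f (Rs j))
        = exp (l * ((\<Sum>j<T. indicator A (Rs j)) - real T * q - s))"
      by (simp add: f_def exp_sum[symmetric] exp_add[symmetric] sum_distrib_left
          sum_subtractf algebra_simps)
    then show ?thesis
      using assms(2) by (auto simp: indicator_def)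
  qed
  have "measure_pmf.prob ?P ?X = measure_pmf.expectation ?P (indicator ?X)" by simp
  also have "\<dots> \<le> measure_pmf.expectation ?P (\<lambda>Rs. exp (- l * s) * (\<Prod>j<T. f (Rs j)))"
    by (intro integral_mono markov integrable_mult_right integrable_prod_Pi_pmf int_f
        integrable_measure_pmf_bounded[where C = 1]) (auto simp: indicator_def)
  also have "\<dots> = exp (- l * s) * measure_pmf.expectation ?P (\<lambda>Rs. \<Prod>j\<in>{..<T}. f (Rs j))"
    by simp
  also have "measure_pmf.expectation ?P (\<lambda>Rs. \<Prod>j\<in>{..<T}. f (Rs j))
      = (\<Prod>j<T. measure_pmf.expectation M f)"
    by (rule expectation_prod_Pi_pmf[where f = "\<lambda>_. f"]) (use int_f in \<open>auto simp: f_def\<close>)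
  finally show ?thesis by (simp add: f_def)
qed

lemma Bernstein_exponent:
  fixes v s :: real
  assumes "0 < v" and "0 < s"
  shows "- (s / (v + s / 3)) * s + v * ((s / (v + s / 3))\<^sup>2 / (2 * (1 - s / (v + s / 3) / 3)))
       = - s\<^sup>2 / (2 * (v + s / 3))"
proof -
  define w where "w = v + s / 3"
  have "0 < w" using assms by (simp add: w_def)
  have "1 - s / w / 3 = v / w" using \<open>0 < w\<close> by (simp add: w_def field_simps)
  then have "v * ((s / w)\<^sup>2 / (2 * (1 - s / w / 3))) = s\<^sup>2 / (2 * w)"
    using assms \<open>0 < w\<close> by (simp add: power2_eq_square)
  then show ?thesis using \<open>0 < w\<close> unfolding w_def[symmetric] by (simp add: power2_eq_square field_simps)
qed

lemma prob_sum_indicator_ge_le_Bernstein: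
  fixes M :: "'b pmf" and A :: "'b set" and s :: real
  defines "q \<equiv> measure_pmf.prob M A"
  assumes "0 < s"
  shows "measure_pmf.prob (Pi_pmf {..<T} d (\<lambda>_. M))
           {Rs. s \<le> (\<Sum>j<T. indicator A (Rs j)) - real T * q}
         \<le> exp (- s\<^sup>2 / (2 * (real T * (q * (1 - q)) + s / 3)))"
proof -
  define v where "v = real T * (q * (1 - q))"
  define l where "l = s / (v + s / 3)"
  let ?mgf = "measure_pmf.expectation M (\<lambda>x. exp (l * (indicator A x - q)))"
  have "0 \<le> q" "q \<le> 1" by (auto simp: q_def)
  then have "0 \<le> v" by (simp add: v_def)
  then have l: "0 \<le> l" using assms(2) by (simp add: l_def)
  have chernoff: "measure_pmf.prob (Pi_pmf {..<T} d (\<lambda>_. M))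
      {Rs. s \<le> (\<Sum>j<T. indicator A (Rs j)) - real T * q} \<le> exp (- l * s) * ?mgf ^ T"
    unfolding q_def by (rule prob_sum_indicator_ge_le_Chernoff[OF l])
  show ?thesis
  proof (cases "v = 0")
    case True
    then have "T = 0 \<or> q = 0 \<or> q = 1" by (simp add: v_def)
    then have "?mgf ^ T = 1"
      by (auto simp: q_def expectation_exp_centered_indicator)
    moreover have "- l * s \<le> - s\<^sup>2 / (2 * (v + s / 3))"
      using assms(2) True by (simp add: l_def power2_eq_square)
    ultimately show ?thesis
      using chernoff unfolding v_def[symmetric] by (simp add: order_trans)
  next
    case False
    with \<open>0 \<le> v\<close> have "0 < v" by simp
    then have "l < 3" using assms(2) by (simp add: l_def divide_less_eq)
    have "?mgf ^ T \<le> exp (q * (1 - q) * (l\<^sup>2 / (2 * (1 - l / 3)))) ^ T"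
      unfolding q_def using l \<open>l < 3\<close>
      by (intro power_mono expectation_exp_centered_indicator_le integral_nonneg) auto
    also have "\<dots> = exp (v * (l\<^sup>2 / (2 * (1 - l / 3))))"
      by (simp add: v_def exp_of_nat_mult[symmetric] algebra_simps)
    finally have "exp (- l * s) * ?mgf ^ T \<le> exp (- l * s) * exp (v * (l\<^sup>2 / (2 * (1 - l / 3))))"
      by (intro mult_left_mono) auto
    also have "\<dots> = exp (- l * s + v * (l\<^sup>2 / (2 * (1 - l / 3))))"
      by (rule mult_exp_exp)
    also have "\<dots> = exp (- s\<^sup>2 / (2 * (v + s / 3)))"
      unfolding l_def using \<open>0 < v\<close> assms(2) by (simp only: Bernstein_exponent)
    finally show ?thesis using chernoff unfolding v_def by simp
  qed
qed

text \<open>With \<open>\<mu> = \<rho> q + a\<close>, the variance \<open>\<rho>\<^sup>2 q (1 - q) = (\<mu> - a)(\<rho> + a - \<mu>)\<close> is at most \<open>\<rho> \<mu>\<close>,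
  and, by AM-GM for \<open>\<mu>\<^sup>2 + a (\<rho> + a)\<close>, at most \<open>(\<rho> + 2 a - 2 \<surd>(a (\<rho> + a))) \<mu>\<close>.\<close>
lemma Bernoulli_variance_le:
  fixes a \<rho> q \<mu> :: real
  assumes "0 \<le> a" and "0 < \<rho>" and "0 \<le> q" and "q \<le> 1" and "\<mu> = \<rho> * q + a"
  shows "\<rho>\<^sup>2 * (q * (1 - q)) \<le> min \<rho> ((\<rho> + a) + a - 2 * sqrt (a * (\<rho> + a))) * \<mu>"
proof -
  define r where "r = sqrt (a * (\<rho> + a))"
  have "r\<^sup>2 = a * (\<rho> + a)" using assms by (simp add: r_def)
  have variance: "\<rho>\<^sup>2 * (q * (1 - q)) = (\<mu> - a) * (\<rho> + a - \<mu>)"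
    using assms by (simp add: power2_eq_square algebra_simps)
  have "(\<mu> - a) * (\<rho> + a - \<mu>) \<le> \<mu> * \<rho>"
    using assms by (intro mult_mono) (auto simp: mult_left_le)
  moreover have "(\<mu> - a) * (\<rho> + a - \<mu>) \<le> ((\<rho> + a) + a - 2 * r) * \<mu>"
    using \<open>r\<^sup>2 = a * (\<rho> + a)\<close> zero_le_power2[of "\<mu> - r"]
    by (simp add: power2_eq_square algebra_simps)
  moreover have "0 \<le> \<mu>" using assms by simp
  ultimately have "(\<mu> - a) * (\<rho> + a - \<mu>) \<le> min \<rho> ((\<rho> + a) + a - 2 * r) * \<mu>"
    by (simp add: min_mult_distrib_right mult.commute)
  then show ?thesis unfolding variance r_def .
qed

lemma quadratic_root_le:
  fixes x a B :: real
  assumes "0 < x" and "0 \<le> a" and "0 \<le> B" and "0 < x\<^sup>2 - 2 * a * x - B"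
  shows "a + sqrt (a\<^sup>2 + B) \<le> x"
proof (rule ccontr)
  define r where "r = sqrt (a\<^sup>2 + B)"
  have "r\<^sup>2 = a\<^sup>2 + B" "a \<le> r" using assms by (simp_all add: r_def real_le_rsqrt)
  assume "\<not> a + sqrt (a\<^sup>2 + B) \<le> x"
  then have "0 < (r - (x - a)) * (r + (x - a))"
    using \<open>a \<le> r\<close> assms(1) by (intro mult_pos_pos) (auto simp: r_def)
  then show False
    using \<open>r\<^sup>2 = a\<^sup>2 + B\<close> assms(4) by (simp add: power2_eq_square algebra_simps)
qed

text \<open>The algebra inverting the lower bound \<open>f_l\<close>: in units of \<open>\<Gamma>\<close>, with \<open>y = \<mu> + \<rho> x / T\<close> the
  estimate and \<open>\<mu>\<close> the true value, the gap condition below is a quadratic inequality in \<open>x\<close>.\<close>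
lemma deviation_ge_of_gap:
  fixes T \<rho> c p \<mu> y x :: real
  assumes "0 < T" and "0 < \<rho>" and "0 < c" and "0 \<le> p" and "0 \<le> \<mu>" and "0 \<le> y"
    and y: "y = \<mu> + \<rho> * x / T"
    and gap: "(\<rho> * c / 3 - c * p) + sqrt ((\<rho> * c / 3 - c * p)\<^sup>2 + 2 * T * p * c * y) < T * (y - \<mu>)"
  shows "c / 3 + sqrt ((c / 3)\<^sup>2 + 2 * c * (T * p * \<mu> / \<rho>\<^sup>2)) \<le> x"
proof -
  define A where "A = \<rho> * c / 3 - c * p"
  define d where "d = y - \<mu>"
  define r where "r = sqrt (A\<^sup>2 + 2 * T * p * c * y)"
  have "0 \<le> 2 * T * p * c * y" using assms by simp
  then have r2: "r\<^sup>2 = A\<^sup>2 + 2 * T * p * c * y" and "\<bar>A\<bar> \<le> r"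
    unfolding r_def by (auto intro: real_le_rsqrt)
  have "A + r < T * d" using gap by (simp add: A_def r_def d_def)
  then have "r\<^sup>2 < (T * d - A)\<^sup>2" and "0 < T * d"
    using \<open>\<bar>A\<bar> \<le> r\<close> by (auto intro!: power_strict_mono)
  from \<open>0 < T * d\<close> have "0 < d" using assms(1) by (simp add: zero_less_mult_iff)
  from \<open>r\<^sup>2 < (T * d - A)\<^sup>2\<close> have "0 < T * (T * d\<^sup>2 - 2 * d * A - 2 * p * c * y)"
    using r2 by (simp add: power2_eq_square algebra_simps)
  then have "0 < T * d\<^sup>2 - 2 * d * A - 2 * p * c * y"
    using assms(1) by (simp add: zero_less_mult_iff)
  then have quadratic: "0 < T * d\<^sup>2 - 2 * d * \<rho> * c / 3 - 2 * p * c * \<mu>"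
    by (simp add: A_def d_def algebra_simps diff_divide_distrib)
  have x: "x = T * d / \<rho>" using y assms(1,2) by (simp add: d_def)
  have "x\<^sup>2 - 2 * (c / 3) * x - 2 * c * (T * p * \<mu> / \<rho>\<^sup>2)
      = T * (T * d\<^sup>2 - 2 * d * \<rho> * c / 3 - 2 * p * c * \<mu>) / \<rho>\<^sup>2"
    using assms(2) by (simp add: x power2_eq_square field_simps)
  also have "\<dots> > 0" using quadratic assms(1,2) by simp
  finally show ?thesis
    using \<open>0 < d\<close> assms by (intro quadratic_root_le) (auto simp: x)
qed

lemma Bernstein_threshold:
  fixes c v w :: real
  assumes "0 < c" and "0 \<le> w" and "w \<le> v"
  defines "s \<equiv> c / 3 + sqrt ((c / 3)\<^sup>2 + 2 * c * v)"
  shows "0 < s" and "c \<le> s\<^sup>2 / (2 * (w + s / 3))"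
proof -
  show "0 < s" using assms by (simp add: s_def add_pos_nonneg)
  have "(s - c / 3)\<^sup>2 = (c / 3)\<^sup>2 + 2 * c * v" using assms by (simp add: s_def)
  then have "s\<^sup>2 = 2 * c * (v + s / 3)" by (simp add: power2_eq_square algebra_simps)
  then have "2 * c * (w + s / 3) \<le> s\<^sup>2" using assms by simp
  then show "c \<le> s\<^sup>2 / (2 * (w + s / 3))"
    using assms \<open>0 < s\<close> by (simp add: field_simps)
qed

lemma prob_bind_pmf:
  "measure_pmf.prob (bind_pmf M N) X = measure_pmf.expectation M (\<lambda>x. measure_pmf.prob (N x) X)"
  unfolding measure_pmf_bind
  by (subst measure_pmf.measure_bind[where N = "count_space UNIV"])
     (auto simp: space_subprob_algebra measure_pmf.subprob_space_axioms)

lemma prob_cond_pmf: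
  assumes "set_pmf p \<inter> s \<noteq> {}"
  shows "measure_pmf.prob (cond_pmf p s) X = measure_pmf.prob p (s \<inter> X) / measure_pmf.prob p s"
  using assms emeasure_measure_pmf_not_zero[OF assms]
  by (simp add: cond_pmf.rep_eq measure_pmf.emeasure_eq_measure)

definition sets_meeting :: "'a set \<Rightarrow> 'a set set" where
  "sets_meeting S = {R. S \<inter> R \<noteq> {}}"

lemma est_eq_sum_indicator:
  assumes "finite S"
  shows "est V E pe b T Rs S = Phi V E pe b / real T * (\<Sum>j<T. indicator (sets_meeting S) (Rs j))
           + (\<Sum>v\<in>S. (1 - gam E pe v) * b v)"
proof -
  have "min 1 (real (card (S \<inter> R))) = indicator (sets_meeting S) R" for R
    using assms by (cases "S \<inter> R = {}") (auto simp: sets_meeting_def Suc_le_eq card_gt_0_iff)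
  then show ?thesis by (simp add: est_def)
qed

locale ic_model =
  fixes V :: "'a set" and E :: "('a \<times> 'a) set" and pe :: "'a \<times> 'a \<Rightarrow> real"
    and b :: "'a \<Rightarrow> real"
  assumes finite_V: "finite V" and E_subset: "E \<subseteq> V \<times> V"
    and pe_prob: "\<And>e. e \<in> E \<Longrightarrow> 0 \<le> pe e \<and> pe e \<le> 1"
    and b_nonneg: "\<And>u. u \<in> V \<Longrightarrow> 0 \<le> b u"
    and Phi_pos: "0 < Phi V E pe b"
begin

lemma finite_E: "finite E"
  using finite_subset[OF E_subset] finite_V by auto

lemma gam_bounds: "0 \<le> gam E pe u \<and> gam E pe u \<le> 1"
proof -
  have "\<And>v. v \<in> in_nbrs E u \<Longrightarrow> 0 \<le> 1 - pe (v, u) \<and> 1 - pe (v, u) \<le> 1"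
    using pe_prob by (force simp: in_nbrs_def)
  then have "0 \<le> (\<Prod>v\<in>in_nbrs E u. 1 - pe (v, u))" "(\<Prod>v\<in>in_nbrs E u. 1 - pe (v, u)) \<le> 1"
    by (auto intro: prod_nonneg prod_le_1)
  then show ?thesis by (simp add: gam_def)
qed

lemma reach_subset: "S \<subseteq> V \<Longrightarrow> reach E g S \<subseteq> V"
  using E_subset by (auto simp: reach_def live_edges_def elim: rtranclE)

definition reached :: "'a set \<Rightarrow> 'a \<Rightarrow> ('a \<times> 'a \<Rightarrow> bool) set" where
  "reached S u = {g. u \<in> reach E g S}"

definition has_live_in_edge :: "'a \<Rightarrow> ('a \<times> 'a \<Rightarrow> bool) set" where
  "has_live_in_edge u = {g. \<exists>v. (v, u) \<in> E \<and> g (v, u)}"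

definition IBS_at :: "'a \<Rightarrow> 'a set pmf" where
  "IBS_at u = map_pmf (\<lambda>g. {v. (v, u) \<in> (live_edges E g)\<^sup>*})
     (cond_pmf (live_pmf E pe) (has_live_in_edge u))"

lemma benefit_eq_sum_prob_reached:
  assumes "S \<subseteq> V"
  shows "benefit E pe b S = (\<Sum>u\<in>V. b u * measure_pmf.prob (live_pmf E pe) (reached S u))"
proof -
  have "(\<Sum>u\<in>reach E g S. b u) = (\<Sum>u\<in>V. b u * indicator (reached S u) g)" for g
    by (subst sum.mono_neutral_right[OF finite_V reach_subset[OF assms]])
       (auto simp: reached_def intro!: sum.cong)
  then have "benefit E pe b S
      = measure_pmf.expectation (live_pmf E pe) (\<lambda>g. \<Sum>u\<in>V. b u * indicator (reached S u) g)"
    unfolding benefit_def by presburger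
  also have "\<dots> = (\<Sum>u\<in>V. measure_pmf.expectation (live_pmf E pe) (\<lambda>g. b u * indicator (reached S u) g))"
    by (intro Bochner_Integration.integral_sum integrable_measure_pmf_bounded[where C = "\<bar>b _\<bar>"])
       (auto simp: indicator_def)
  finally show ?thesis by simp
qed

lemma prob_has_live_in_edge: "measure_pmf.prob (live_pmf E pe) (has_live_in_edge u) = gam E pe u"
proof -
  define B where "B = (\<lambda>e::'a \<times> 'a. if snd e = u then {False} else UNIV)"
  have "- has_live_in_edge u = Pi E B" by (auto simp: has_live_in_edge_def B_def Pi_def)
  then have "measure_pmf.prob (live_pmf E pe) (- has_live_in_edge u)
      = (\<Prod>e\<in>E. measure_pmf.prob (bernoulli_pmf (pe e)) (B e))"
    unfolding live_pmf_def by (simp add: measure_Pi_pmf_Pi[OF finite_E])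
  also have "\<dots> = (\<Prod>e\<in>E. if snd e = u then 1 - pe e else 1)"
    by (intro prod.cong refl) (use pe_prob in \<open>auto simp: B_def measure_pmf_single\<close>)
  also have "\<dots> = (\<Prod>e\<in>{e\<in>E. snd e = u}. 1 - pe e)"
    by (rule prod.inter_filter[OF finite_E, symmetric])
  also have "\<dots> = (\<Prod>v\<in>in_nbrs E u. 1 - pe (v, u))"
    by (rule prod.reindex_cong[where l = "\<lambda>v. (v, u)"]) (force simp: inj_on_def in_nbrs_def)+
  finally have "measure_pmf.prob (live_pmf E pe) (- has_live_in_edge u) = 1 - gam E pe u"
    by (simp add: gam_def)
  then show ?thesis
    using measure_pmf.prob_compl[of "has_live_in_edge u" "live_pmf E pe"]
    by (simp add: Compl_eq_Diff_UNIV)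
qed

text \<open>A node outside \<open>S\<close> is reached from \<open>S\<close> only through a live in-edge, so conditioning on
  such an edge rescales its reachability probability by \<open>\<gamma>(u)\<close>; nodes of \<open>S\<close> are always
  reached, and contribute the term that the IBS estimator adds separately.\<close>
lemma prob_reached_eq:
  assumes "u \<in> V"
  shows "b u * measure_pmf.prob (live_pmf E pe) (reached S u)
       = gam E pe u * b u * measure_pmf.prob (IBS_at u) (sets_meeting S)
         + (if u \<in> S then (1 - gam E pe u) * b u else 0)"
proof (cases "u \<in> S")
  case True
  then have "reached S u = UNIV" "(\<lambda>g. {v. (v, u) \<in> (live_edges E g)\<^sup>*}) -` sets_meeting S = UNIV"
    by (auto simp: reached_def reach_def sets_meeting_def)
  then show ?thesis using True by (simp add: IBS_at_def algebra_simps)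
next
  case False
  have reached_sub: "reached S u \<subseteq> has_live_in_edge u"
    using False by (auto simp: reached_def reach_def has_live_in_edge_def live_edges_def
        elim: rtranclE)
  have IBS_at: "measure_pmf.prob (IBS_at u) (sets_meeting S)
      = measure_pmf.prob (cond_pmf (live_pmf E pe) (has_live_in_edge u)) (reached S u)"
  proof -
    have "(\<lambda>g. {v. (v, u) \<in> (live_edges E g)\<^sup>*}) -` sets_meeting S = reached S u"
      by (auto simp: sets_meeting_def reached_def reach_def)
    then show ?thesis by (simp add: IBS_at_def)
  qed
  show ?thesis
  proof (cases "gam E pe u = 0")
    case True
    then have "measure_pmf.prob (live_pmf E pe) (reached S u) = 0"
      using measure_pmf.finite_measure_mono[OF reached_sub, of "live_pmf E pe"]
        prob_has_live_in_edge[of u] by (simp add: measure_le_0_iff)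
    then show ?thesis using True False by simp
  next
    case False
    then have "set_pmf (live_pmf E pe) \<inter> has_live_in_edge u \<noteq> {}"
      using prob_has_live_in_edge measure_pmf_zero_iff by metis
    then have "measure_pmf.prob (IBS_at u) (sets_meeting S)
        = measure_pmf.prob (live_pmf E pe) (reached S u) / gam E pe u"
      using reached_sub by (simp add: IBS_at prob_cond_pmf prob_has_live_in_edge Int_absorb1)
    then show ?thesis using False \<open>u \<notin> S\<close> by simp
  qed
qed

lemma pmf_source_pmf:
  "pmf (source_pmf V E pe b) u = (if u \<in> V then gam E pe u * b u / Phi V E pe b else 0)"
  unfolding source_pmf_def
proof (rule pmf_embed_pmf)
  have nonneg: "\<And>x. 0 \<le> (if x \<in> V then gam E pe x * b x / Phi V E pe b else 0)"
    using gam_bounds b_nonneg Phi_pos by auto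
  then show "0 \<le> (if x \<in> V then gam E pe x * b x / Phi V E pe b else 0)" for x .
  have "(\<Sum>x\<in>V. gam E pe x * b x / Phi V E pe b) = 1"
    using Phi_pos by (simp add: sum_divide_distrib[symmetric] Phi_def)
  moreover have "(\<Sum>x\<in>V. ennreal (gam E pe x * b x / Phi V E pe b))
      = ennreal (\<Sum>x\<in>V. gam E pe x * b x / Phi V E pe b)"
    using nonneg by (intro sum_ennreal) (metis (full_types))
  ultimately show "(\<integral>\<^sup>+ x. ennreal (if x \<in> V then gam E pe x * b x / Phi V E pe b else 0) \<partial>count_space UNIV) = 1"
    by (simp add: nn_integral_count_space'[OF finite_V])
qed

lemma Phi_mult_prob_IBS_meeting:
  "Phi V E pe b * measure_pmf.prob (IBS_pmf V E pe b) (sets_meeting S)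
     = (\<Sum>u\<in>V. gam E pe u * b u * measure_pmf.prob (IBS_at u) (sets_meeting S))"
proof -
  have "measure_pmf.prob (IBS_pmf V E pe b) (sets_meeting S)
      = measure_pmf.expectation (source_pmf V E pe b) (\<lambda>u. measure_pmf.prob (IBS_at u) (sets_meeting S))"
    unfolding IBS_pmf_def IBS_at_def has_live_in_edge_def by (rule prob_bind_pmf)
  also have "\<dots> = (\<Sum>u\<in>V. gam E pe u * b u / Phi V E pe b * measure_pmf.prob (IBS_at u) (sets_meeting S))"
    by (subst integral_measure_pmf[OF finite_V])
       (auto simp: set_pmf_eq pmf_source_pmf split: if_splits intro!: sum.cong)
  finally show ?thesis using Phi_pos by (simp add: sum_distrib_left)
qed

text \<open>The identity that makes the estimator unbiased.\<close>
lemma benefit_eq_Phi_prob_IBS_meeting: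
  assumes "S \<subseteq> V"
  shows "benefit E pe b S = Phi V E pe b * measure_pmf.prob (IBS_pmf V E pe b) (sets_meeting S)
           + (\<Sum>v\<in>S. (1 - gam E pe v) * b v)"
proof -
  have "(\<Sum>u\<in>V. if u \<in> S then (1 - gam E pe u) * b u else 0) = (\<Sum>v\<in>S. (1 - gam E pe v) * b v)"
    using assms by (simp add: sum.If_cases[OF finite_V] Int_absorb1)
  then show ?thesis
    using assms by (simp add: benefit_eq_sum_prob_reached prob_reached_eq sum.distrib
        Phi_mult_prob_IBS_meeting)
qed

lemma mu_min_nonneg: "0 < Gamma_tot V b \<Longrightarrow> S \<subseteq> V \<Longrightarrow> 0 \<le> mu_min V E pe b S"
  unfolding mu_min_def using gam_bounds b_nonneg
  by (intro divide_nonneg_pos sum_nonneg mult_nonneg_nonneg) auto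

lemma pS_nonneg:
  assumes "0 < Gamma_tot V b" and "S \<subseteq> V"
  shows "0 \<le> pS V E pe b S"
proof -
  let ?a = "mu_min V E pe b S" and ?\<rho> = "rho V E pe b"
  have "0 \<le> ?a" "0 < ?\<rho>" using assms Phi_pos mu_min_nonneg by (auto simp: rho_def)
  moreover have "sqrt (?a * mu_max V E pe b S) = sqrt ?a * sqrt (?\<rho> + ?a)"
    by (simp add: mu_max_def real_sqrt_mult)
  ultimately have "mu_max V E pe b S + ?a - 2 * sqrt (?a * mu_max V E pe b S)
      = (sqrt (?\<rho> + ?a) - sqrt ?a)\<^sup>2"
    by (simp add: mu_max_def power2_eq_square algebra_simps)
  then show ?thesis using \<open>0 < ?\<rho>\<close> by (simp add: pS_def)
qed

lemma benefit_div_Gamma_eq: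
  assumes "0 < Gamma_tot V b" and "S \<subseteq> V"
  shows "benefit E pe b S / Gamma_tot V b
      = rho V E pe b * measure_pmf.prob (IBS_pmf V E pe b) (sets_meeting S) + mu_min V E pe b S"
  using assms by (simp add: benefit_eq_Phi_prob_IBS_meeting rho_def mu_min_def add_divide_distrib)

lemma variance_le_pS:
  assumes "0 < Gamma_tot V b" and "S \<subseteq> V"
  defines "q \<equiv> measure_pmf.prob (IBS_pmf V E pe b) (sets_meeting S)"
  shows "q * (1 - q) \<le> pS V E pe b S * (benefit E pe b S / Gamma_tot V b) / (rho V E pe b)\<^sup>2"
proof -
  have "0 < rho V E pe b" using assms(1) Phi_pos by (simp add: rho_def)
  moreover have "(rho V E pe b)\<^sup>2 * (q * (1 - q)) \<le> pS V E pe b S * (benefit E pe b S / Gamma_tot V b)"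
    unfolding pS_def mu_max_def q_def
    using assms(1,2) Phi_pos mu_min_nonneg
    by (intro Bernoulli_variance_le benefit_div_Gamma_eq) (auto simp: rho_def mult.commute)
  ultimately show ?thesis by (subst pos_le_divide_eq) (auto simp: mult.commute)
qed

definition deviation_threshold :: "'a set \<Rightarrow> nat \<Rightarrow> real \<Rightarrow> real" where
  "deviation_threshold S T \<delta> = ln (1 / \<delta>) / 3 + sqrt ((ln (1 / \<delta>) / 3)\<^sup>2 + 2 * ln (1 / \<delta>)
     * (real T * pS V E pe b S * (benefit E pe b S / Gamma_tot V b) / (rho V E pe b)\<^sup>2))"

lemma f_l_violation_imp_deviation:
  assumes "0 < Gamma_tot V b" and "S \<subseteq> V" and "0 < T" and "0 < \<delta>" and "\<delta> < 1"
    and "benefit E pe b S < f_l V E pe b T S \<delta> Rs"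
  defines "q \<equiv> measure_pmf.prob (IBS_pmf V E pe b) (sets_meeting S)"
  shows "deviation_threshold S T \<delta> \<le> (\<Sum>j<T. indicator (sets_meeting S) (Rs j)) - real T * q"
proof -
  define c where "c = ln (1 / \<delta>)"
  let ?\<Gamma> = "Gamma_tot V b" and ?\<rho> = "rho V E pe b" and ?p = "pS V E pe b S"
  let ?K = "\<Sum>j<T. indicator (sets_meeting S) (Rs j) :: real"
  define y where "y = est V E pe b T Rs S / ?\<Gamma>"
  have "finite S" using assms(2) finite_V finite_subset by blast
  have y: "y = benefit E pe b S / ?\<Gamma> + ?\<rho> * (?K - real T * q) / real T"
    using assms(1,3) \<open>finite S\<close>
    by (simp add: y_def est_eq_sum_indicator benefit_div_Gamma_eq[OF assms(1,2)] q_def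
        rho_def mu_min_def field_simps)
  have "0 \<le> ?K" by (simp add: sum_nonneg)
  then have "0 \<le> y"
    using assms(1-3) \<open>finite S\<close> Phi_pos gam_bounds b_nonneg
    by (auto simp: y_def est_eq_sum_indicator intro!: divide_nonneg_pos add_nonneg_nonneg
        sum_nonneg mult_nonneg_nonneg)
  have "?\<Gamma> / real T * ((?\<rho> * c / 3 - c * ?p) + sqrt ((?\<rho> * c / 3 - c * ?p)\<^sup>2
          + 2 * real T * ?p * c * y)) < est V E pe b T Rs S - benefit E pe b S"
    using assms(6) by (simp add: f_l_def Let_def c_def y_def)
  then have "(?\<rho> * c / 3 - c * ?p) + sqrt ((?\<rho> * c / 3 - c * ?p)\<^sup>2 + 2 * real T * ?p * c * y)
      < real T * (y - benefit E pe b S / ?\<Gamma>)"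
    using assms(1,3) by (simp add: y_def field_simps)
  then show ?thesis
    using assms Phi_pos \<open>0 \<le> y\<close> pS_nonneg benefit_div_Gamma_eq mu_min_nonneg
    unfolding deviation_threshold_def c_def[symmetric]
    by (intro deviation_ge_of_gap[OF _ _ _ _ _ _ y])
       (auto simp: c_def rho_def q_def intro!: add_nonneg_nonneg)
qed

lemma prob_hit_count_deviation_le:
  assumes "0 < Gamma_tot V b" and "S \<subseteq> V" and "0 < \<delta>" and "\<delta> < 1"
  defines "q \<equiv> measure_pmf.prob (IBS_pmf V E pe b) (sets_meeting S)"
  shows "measure_pmf.prob (IBS_sample_pmf V E pe b T)
           {Rs. deviation_threshold S T \<delta> \<le> (\<Sum>j<T. indicator (sets_meeting S) (Rs j)) - real T * q}
         \<le> \<delta>"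
proof -
  define c where "c = ln (1 / \<delta>)"
  define v where "v = real T * pS V E pe b S * (benefit E pe b S / Gamma_tot V b) / (rho V E pe b)\<^sup>2"
  define s where "s = c / 3 + sqrt ((c / 3)\<^sup>2 + 2 * c * v)"
  have "0 < c" and "exp (- c) = \<delta>" using assms(3,4) by (simp_all add: c_def ln_div)
  have "0 \<le> real T * (q * (1 - q))" by (simp add: q_def)
  moreover have "real T * (q * (1 - q)) \<le> v"
    using variance_le_pS[OF assms(1,2)] unfolding v_def q_def times_divide_eq_right[symmetric] mult.assoc
    by (rule mult_left_mono) simp
  ultimately have "0 < s" and "c \<le> s\<^sup>2 / (2 * (real T * (q * (1 - q)) + s / 3))"
    unfolding s_def by (rule Bernstein_threshold[OF \<open>0 < c\<close>])+
  have "measure_pmf.prob (IBS_sample_pmf V E pe b T)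
      {Rs. s \<le> (\<Sum>j<T. indicator (sets_meeting S) (Rs j)) - real T * q}
      \<le> exp (- s\<^sup>2 / (2 * (real T * (q * (1 - q)) + s / 3)))"
    unfolding IBS_sample_pmf_def q_def by (rule prob_sum_indicator_ge_le_Bernstein[OF \<open>0 < s\<close>])
  also have "\<dots> \<le> exp (- c)" using \<open>c \<le> _\<close> by simp
  finally show ?thesis using \<open>exp (- c) = \<delta>\<close> by (simp add: deviation_threshold_def s_def v_def c_def)
qed

end

theorem lemma6:
  fixes V :: "'a set" and E :: "('a \<times> 'a) set" and pe :: "'a \<times> 'a \<Rightarrow> real"
    and b :: "'a \<Rightarrow> real" and S :: "'a set" and T :: nat and \<delta> :: real
  assumes "finite V" and "E \<subseteq> V \<times> V"
    and "\<And>e. e \<in> E \<Longrightarrow> 0 < pe e \<and> pe e < 1"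
    and "\<And>u. u \<in> V \<Longrightarrow> b u \<ge> 0"
    and "Gamma_tot V b > 0" and "Phi V E pe b > 0"
    and "S \<subseteq> V" and "T > 0"
    and "0 < \<delta>" and "\<delta> < 1"
  shows "measure_pmf.prob (IBS_sample_pmf V E pe b T)
           {Rs. benefit E pe b S \<ge> f_l V E pe b T S \<delta> Rs} \<ge> 1 - \<delta>"
proof -
  interpret ic_model V E pe b
    using assms(1-4,6) by unfold_locales (auto simp: less_imp_le)
  let ?holds = "{Rs. benefit E pe b S \<ge> f_l V E pe b T S \<delta> Rs}"
  have "- ?holds \<subseteq> {Rs. deviation_threshold S T \<delta> \<le> (\<Sum>j<T. indicator (sets_meeting S) (Rs j))
          - real T * measure_pmf.prob (IBS_pmf V E pe b) (sets_meeting S)}"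
    using f_l_violation_imp_deviation[OF assms(5,7,8,9,10)] by (auto simp: not_le)
  then have "measure_pmf.prob (IBS_sample_pmf V E pe b T) (- ?holds) \<le> \<delta>"
    using order_trans[OF measure_pmf.finite_measure_mono prob_hit_count_deviation_le[OF assms(5,7,9,10)]]
    by simp
  then show ?thesis
    using measure_pmf.prob_compl[of ?holds "IBS_sample_pmf V E pe b T"]
    by (simp add: Compl_eq_Diff_UNIV)
qed

end
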